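(* Let $V\in(\mathbb{R}\cup\{-\infty\})^{n\times p}$ have no row and no column identically equal to $-\infty$. If a Hilbert ball $B(a,r)$ with $a\in\mathbb{R}^n$ and radius $r>0$ is included in $\operatorname{Col}(V)$, then it is also included in a simplicial tropical cone generated by some $n$ columns of $V$.
   Context: $\mathbb{R}_{\max}=\mathbb{R}\cup\{-\infty\}$. A tropical cone is a subset $\mathcal{C}\subset\mathbb{R}_{\max}^n$ such that $x,y\in\mathcal C$, $\lambda\in\mathbb{R}_{\max}$ imply $\lambda+x\in\mathcal C$ and $x\vee y=(\max(x_i,y_i))_i\in\mathcal C$. $\operatorname{Col}(V)$ is the tropical cone generated by the columns of $V$, i.e. $\{Vx:x\in\mathbb{R}_{\max}^p\}$ with $(Vx)_i=\max_k(V_{ik}+x_k)$. Hilbert's projective metric: $d(x,y)=\inf\{\lambda-\mu:\lambda,\mu\in\mathbb{R},\ \mu+y_i\le x_i\le\lambda+y_i\ \forall i\}$; $B(a,r)=\{x\in\mathbb{R}_{\max}^n:d(a,x)\le r\}$. A vector $u$ of a tropical cone $\mathcal C$ is extreme if $u=v\vee w$ with $v,w\in\mathcal C$ implies $u=v$ or $u=w$; an extreme direction is a set $\{\lambda+u:\lambda\in\mathbb{R}_{\max}\}$ with $u$ extreme. A tropical cone in $\mathbb{R}_{\max}^n$ is simplicial if it has precisely $n$ extreme directions. *)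

theory Defs
  imports "HOL-Library.Extended_Real"
begin

text \<open>R_max is modelled as the extended reals without +infinity; the bottom
element is MInfty. Vectors of R_max^n are functions from a finite index type.\<close>

definition rmax_vec :: "('n \<Rightarrow> ereal) \<Rightarrow> bool" where
  "rmax_vec x \<longleftrightarrow> (\<forall>i. x i \<noteq> \<infinity>)"

definition rmax_vecs :: "('n \<Rightarrow> ereal) set" where
  "rmax_vecs = {x. rmax_vec x}"

definition tropical_cone :: "('n \<Rightarrow> ereal) set \<Rightarrow> bool" where
  "tropical_cone C \<longleftrightarrow> C \<subseteq> rmax_vecs \<and>
     (\<forall>x\<in>C. \<forall>l::ereal. l \<noteq> \<infinity> \<longrightarrow> (\<lambda>i. l + x i) \<in> C) \<and>
     (\<forall>x\<in>C. \<forall>y\<in>C. (\<lambda>i. max (x i) (y i)) \<in> C)"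

definition col_sub :: "('n \<Rightarrow> 'p \<Rightarrow> ereal) \<Rightarrow> 'p set \<Rightarrow> ('n \<Rightarrow> ereal) set" where
  "col_sub V S = {y. \<exists>c::'p \<Rightarrow> ereal. rmax_vec c \<and> y = (\<lambda>i. SUP k\<in>S. V i k + c k)}"

definition Col :: "('n \<Rightarrow> 'p \<Rightarrow> ereal) \<Rightarrow> ('n \<Rightarrow> ereal) set" where
  "Col V = col_sub V UNIV"

definition hilbert_dist :: "('n \<Rightarrow> ereal) \<Rightarrow> ('n \<Rightarrow> ereal) \<Rightarrow> ereal" where
  "hilbert_dist x y = Inf {ereal (l - m) | l m :: real.
      \<forall>i. ereal m + y i \<le> x i \<and> x i \<le> ereal l + y i}"

definition hilbert_ball :: "('n \<Rightarrow> ereal) \<Rightarrow> real \<Rightarrow> ('n \<Rightarrow> ereal) set" where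
  "hilbert_ball a r = {x \<in> rmax_vecs. hilbert_dist a x \<le> ereal r}"

definition extreme_vec :: "('n \<Rightarrow> ereal) set \<Rightarrow> ('n \<Rightarrow> ereal) \<Rightarrow> bool" where
  "extreme_vec C u \<longleftrightarrow> u \<in> C \<and>
     (\<forall>v\<in>C. \<forall>w\<in>C. u = (\<lambda>i. max (v i) (w i)) \<longrightarrow> u = v \<or> u = w)"

definition extreme_directions :: "('n \<Rightarrow> ereal) set \<Rightarrow> ('n \<Rightarrow> ereal) set set" where
  "extreme_directions C = {D. \<exists>u. extreme_vec C u \<and> u \<noteq> (\<lambda>i. -\<infinity>) \<and>
      D = {(\<lambda>i. l + u i) | l::ereal. l \<noteq> \<infinity>}}"

definition simplicial :: "('n::finite \<Rightarrow> ereal) set \<Rightarrow> bool" where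
  "simplicial C \<longleftrightarrow> tropical_cone C \<and> finite (extreme_directions C) \<and>
     card (extreme_directions C) = card (UNIV :: 'n set)"

end

theory Submission
  imports Defs
begin

text \<open>For each \<open>j\<close>, the point of the ball that equals \<open>a\<^sub>j\<close> at \<open>j\<close> and \<open>a\<^sub>i - r\<close> elsewhere
  lies in \<open>Col V\<close>; a column of \<open>V\<close> attaining its \<open>j\<close>-th coordinate, shifted by a scalar, is a
  vector \<open>W\<^sub>j\<close> with \<open>W\<^sub>j\<^sub>j = a\<^sub>j\<close> and \<open>W\<^sub>i\<^sub>j \<le> a\<^sub>i - r\<close> for \<open>i \<noteq> j\<close>. Every \<open>b\<close> in the ball is the
  tropical combination \<open>max\<^sub>j (b\<^sub>j - a\<^sub>j + W\<^sub>j)\<close>, so the ball lies in the cone generated by these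
  \<open>n\<close> columns. The matrix \<open>W\<close> has a strictly dominant diagonal,
  \<open>W\<^sub>i\<^sub>j + W\<^sub>j\<^sub>i < W\<^sub>i\<^sub>i + W\<^sub>j\<^sub>j\<close>, which makes its columns pairwise non-proportional and each of
  them extreme; since every extreme vector of a finitely generated cone is a multiple of a
  generator, the cone has exactly \<open>n\<close> extreme directions.\<close>

lemma SUP_finite_attained:
  fixes f :: "'a::finite \<Rightarrow> 'b::complete_linorder"
  obtains j where "(SUP j. f j) = f j"
proof -
  have "Sup (range f) \<in> range f"
    by (rule finite_Sup_in) (auto simp: sup_max max_def)
  then show ?thesis using that by auto
qed

lemma ereal_add_SUP_finite:
  fixes f :: "'a::finite \<Rightarrow> ereal"
  shows "l + (SUP j. f j) = (SUP j. l + f j)"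
proof (rule order.antisym)
  obtain j0 where "(SUP j. f j) = f j0"
    by (rule SUP_finite_attained)
  then show "l + (SUP j. f j) \<le> (SUP j. l + f j)"
    by (metis SUP_upper UNIV_I)
  show "(SUP j. l + f j) \<le> l + (SUP j. f j)"
    by (rule SUP_least) (simp add: add_left_mono SUP_upper)
qed

lemma ereal_add_max_distrib:
  fixes x y z :: ereal
  shows "x + max y z = max (x + y) (x + z)"
  by (auto simp: max_def add_left_mono intro: order.antisym)

section \<open>Tropical cones and extreme vectors\<close>

lemma tropical_cone_max:
  "tropical_cone C \<Longrightarrow> x \<in> C \<Longrightarrow> y \<in> C \<Longrightarrow> (\<lambda>i. max (x i) (y i)) \<in> C"
  by (simp add: tropical_cone_def)

lemma extreme_vecD:
  "extreme_vec C u \<Longrightarrow> v \<in> C \<Longrightarrow> w \<in> C \<Longrightarrow> u = (\<lambda>i. max (v i) (w i)) \<Longrightarrow> u = v \<or> u = w"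
  by (simp add: extreme_vec_def)

lemma tropical_cone_finite_join:
  assumes C: "tropical_cone C" and F: "finite F" "F \<noteq> {}" "F \<subseteq> C"
  shows "(\<lambda>i. SUP v\<in>F. v i) \<in> C"
  using F
proof (induction F rule: finite_ne_induct)
  case (singleton v)
  then show ?case by simp
next
  case (insert v F)
  have "v \<in> C" "(\<lambda>i. SUP w\<in>F. w i) \<in> C"
    using insert by auto
  from tropical_cone_max[OF C this] show ?case
    by (simp add: sup_max)
qed

lemma extreme_vec_finite_join:
  assumes C: "tropical_cone C" and u: "extreme_vec C u"
    and F: "finite F" "F \<noteq> {}" "F \<subseteq> C" and join: "u = (\<lambda>i. SUP v\<in>F. v i)"
  shows "u \<in> F"
  using F join
proof (induction F rule: finite_ne_induct)
  case (singleton v)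
  then show ?case by simp
next
  case (insert v F)
  have "v \<in> C" "F \<subseteq> C"
    using insert.prems by auto
  moreover have "(\<lambda>i. SUP w\<in>F. w i) \<in> C"
    using tropical_cone_finite_join[OF C \<open>finite F\<close> \<open>F \<noteq> {}\<close> \<open>F \<subseteq> C\<close>] .
  moreover have "u = (\<lambda>i. max (v i) (SUP w\<in>F. w i))"
    using insert.prems by (simp add: sup_max)
  ultimately have "u = v \<or> u = (\<lambda>i. SUP w\<in>F. w i)"
    using extreme_vecD[OF u] by blast
  then show ?case
  proof
    assume "u = (\<lambda>i. SUP w\<in>F. w i)"
    then show ?case
      using insert.IH \<open>F \<subseteq> C\<close> by simp
  qed simp
qed

definition ray :: "('n \<Rightarrow> ereal) \<Rightarrow> ('n \<Rightarrow> ereal) set" where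
  "ray u = {(\<lambda>i. l + u i) | l::ereal. l \<noteq> \<infinity>}"

lemma self_in_ray: "u \<in> ray u"
  unfolding ray_def by (intro CollectI exI[of _ 0]) simp

lemma ray_add_const: "ray (\<lambda>i. u i + ereal m) = ray u"
proof (intro equalityI subsetI)
  fix x assume "x \<in> ray (\<lambda>i. u i + ereal m)"
  then obtain l where l: "l \<noteq> \<infinity>" and x: "x = (\<lambda>i. l + (u i + ereal m))"
    by (auto simp: ray_def)
  have "x = (\<lambda>i. (l + ereal m) + u i)"
    unfolding x by (simp add: ac_simps)
  moreover have "l + ereal m \<noteq> \<infinity>"
    using l by simp
  ultimately show "x \<in> ray u"
    unfolding ray_def by blast
next
  fix x assume "x \<in> ray u"
  then obtain l where l: "l \<noteq> \<infinity>" and x: "x = (\<lambda>i. l + u i)"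
    by (auto simp: ray_def)
  have "l + u i = (l - ereal m) + (u i + ereal m)" for i
    using l by (cases l; cases "u i") auto
  then have "x = (\<lambda>i. (l - ereal m) + (u i + ereal m))"
    unfolding x by simp
  moreover have "l - ereal m \<noteq> \<infinity>"
    using l by (cases l) auto
  ultimately show "x \<in> ray (\<lambda>i. u i + ereal m)"
    unfolding ray_def by blast
qed

section \<open>The cone generated by the columns of a matrix\<close>

lemma mem_Col_iff:
  "x \<in> Col W \<longleftrightarrow> (\<exists>c. rmax_vec c \<and> x = (\<lambda>i. SUP k. W i k + c k))"
  by (simp add: Col_def col_sub_def)

lemma Col_subset_rmax_vecs:
  fixes W :: "'n \<Rightarrow> 'p::finite \<Rightarrow> ereal"
  assumes "\<And>i k. W i k \<noteq> \<infinity>"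
  shows "Col W \<subseteq> rmax_vecs"
proof
  fix x assume "x \<in> Col W"
  then obtain c where c: "rmax_vec c" and x: "x = (\<lambda>i. SUP k. W i k + c k)"
    by (auto simp: mem_Col_iff)
  have "x i \<noteq> \<infinity>" for i
  proof -
    obtain k where "x i = W i k + c k"
      using SUP_finite_attained[of "\<lambda>k. W i k + c k"] x by metis
    then show ?thesis using assms c by (simp add: rmax_vec_def)
  qed
  then show "x \<in> rmax_vecs" by (simp add: rmax_vecs_def rmax_vec_def)
qed

lemma tropical_cone_Col:
  fixes W :: "'n \<Rightarrow> 'p::finite \<Rightarrow> ereal"
  assumes "\<And>i k. W i k \<noteq> \<infinity>"
  shows "tropical_cone (Col W)"
  unfolding tropical_cone_def
proof (intro conjI ballI allI impI Col_subset_rmax_vecs[OF assms])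
  fix x and l :: ereal assume "x \<in> Col W" "l \<noteq> \<infinity>"
  then obtain c where c: "rmax_vec c" and x: "x = (\<lambda>i. SUP k. W i k + c k)"
    by (auto simp: mem_Col_iff)
  have "(\<lambda>i. l + x i) = (\<lambda>i. SUP k. W i k + (l + c k))"
    unfolding x ereal_add_SUP_finite by (simp add: ac_simps)
  moreover have "rmax_vec (\<lambda>k. l + c k)"
    using c \<open>l \<noteq> \<infinity>\<close> by (simp add: rmax_vec_def)
  ultimately show "(\<lambda>i. l + x i) \<in> Col W"
    by (auto simp: mem_Col_iff)
next
  fix x y assume "x \<in> Col W" "y \<in> Col W"
  then obtain c d where c: "rmax_vec c" and x: "x = (\<lambda>i. SUP k. W i k + c k)"
    and d: "rmax_vec d" and y: "y = (\<lambda>i. SUP k. W i k + d k)"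
    by (auto simp: mem_Col_iff)
  have "max (x i) (y i) = (SUP k. W i k + max (c k) (d k))" for i
    unfolding x y ereal_add_max_distrib
    using Complete_Lattices.SUP_sup_distrib[of "\<lambda>k. W i k + c k" UNIV "\<lambda>k. W i k + d k"]
    by (simp add: sup_max)
  moreover have "rmax_vec (\<lambda>k. max (c k) (d k))"
    using c d by (simp add: rmax_vec_def max_def)
  ultimately show "(\<lambda>i. max (x i) (y i)) \<in> Col W"
    by (auto simp: mem_Col_iff)
qed

lemma column_multiple_in_Col:
  assumes W: "\<And>i k. W i k \<noteq> \<infinity>" and t: "t \<noteq> \<infinity>"
  shows "(\<lambda>i. W i k + t) \<in> Col W"
proof -
  define c where "c = (\<lambda>k'. if k' = k then t else -\<infinity>)"
  have "(SUP k'. W i k' + c k') = W i k + t" for i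
  proof (rule order.antisym)
    have "W i k' + c k' \<le> W i k + t" for k'
      using W by (cases "k' = k"; cases "W i k'") (auto simp: c_def)
    then show "(SUP k'. W i k' + c k') \<le> W i k + t"
      by (rule SUP_least)
    show "W i k + t \<le> (SUP k'. W i k' + c k')"
      by (rule SUP_upper2[of k]) (simp_all add: c_def)
  qed
  moreover have "rmax_vec c"
    using t by (simp add: rmax_vec_def c_def)
  ultimately show ?thesis
    unfolding mem_Col_iff by (intro exI[of _ c]) simp
qed

lemma extreme_vec_Col_imp_column_multiple:
  fixes W :: "'n \<Rightarrow> 'p::finite \<Rightarrow> ereal"
  assumes W: "\<And>i k. W i k \<noteq> \<infinity>"
    and u: "extreme_vec (Col W) u" and nz: "u \<noteq> (\<lambda>i. -\<infinity>)"
  obtains k m where "u = (\<lambda>i. W i k + ereal m)"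
proof -
  obtain c where c: "rmax_vec c" and uc: "u = (\<lambda>i. SUP k. W i k + c k)"
    using u by (auto simp: extreme_vec_def mem_Col_iff)
  define F where "F = range (\<lambda>k i. W i k + c k)"
  have "finite F" "F \<noteq> {}"
    by (simp_all add: F_def)
  moreover have "F \<subseteq> Col W"
    using column_multiple_in_Col[where W=W, OF W] c by (auto simp: F_def rmax_vec_def)
  moreover have "u = (\<lambda>i. SUP v\<in>F. v i)"
    unfolding uc F_def image_image by simp
  ultimately have "u \<in> F"
    by (rule extreme_vec_finite_join[OF tropical_cone_Col[where W=W, OF W] u])
  then obtain k where k: "u = (\<lambda>i. W i k + c k)"
    by (auto simp: F_def)
  have "c k \<noteq> -\<infinity>"
  proof
    assume "c k = -\<infinity>"
    then have "W i k + c k = -\<infinity>" for i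
      using W by (cases "W i k") auto
    then show False
      using nz k by (simp only:)
  qed
  then obtain m where "c k = ereal m"
    using c by (cases "c k") (auto simp: rmax_vec_def)
  then show ?thesis using k that by simp
qed

lemma col_sub_range:
  assumes "inj f"
  shows "col_sub V (range f) = Col (\<lambda>i j. V i (f j))"
proof (intro equalityI subsetI)
  fix y assume "y \<in> col_sub V (range f)"
  then obtain c where "rmax_vec c" "y = (\<lambda>i. SUP k\<in>range f. V i k + c k)"
    by (auto simp: col_sub_def)
  then show "y \<in> Col (\<lambda>i j. V i (f j))"
    unfolding mem_Col_iff by (intro exI[of _ "c \<circ> f"]) (simp add: rmax_vec_def image_image)
next
  fix y assume "y \<in> Col (\<lambda>i j. V i (f j))"
  then obtain c where c: "rmax_vec c" and y: "y = (\<lambda>i. SUP j. V i (f j) + c j)"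
    by (auto simp: mem_Col_iff)
  have "y = (\<lambda>i. SUP k\<in>range f. V i k + (c \<circ> inv f) k)"
    unfolding y by (simp add: image_image inv_f_f[OF assms])
  moreover have "rmax_vec (c \<circ> inv f)"
    using c by (simp add: rmax_vec_def)
  ultimately show "y \<in> col_sub V (range f)"
    unfolding col_sub_def by blast
qed

lemma Col_add_column_consts: "Col (\<lambda>i j. W i j + ereal (\<gamma> j)) = Col W"
proof (intro equalityI subsetI)
  fix y assume "y \<in> Col (\<lambda>i j. W i j + ereal (\<gamma> j))"
  then obtain c where c: "rmax_vec c" and y: "y = (\<lambda>i. SUP j. W i j + ereal (\<gamma> j) + c j)"
    by (auto simp: mem_Col_iff)
  then have "y = (\<lambda>i. SUP j. W i j + (ereal (\<gamma> j) + c j))"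
    by (simp add: ac_simps)
  moreover have "rmax_vec (\<lambda>j. ereal (\<gamma> j) + c j)"
    using c by (simp add: rmax_vec_def)
  ultimately show "y \<in> Col W"
    unfolding mem_Col_iff by blast
next
  fix y assume "y \<in> Col W"
  then obtain c where c: "rmax_vec c" and y: "y = (\<lambda>i. SUP j. W i j + c j)"
    by (auto simp: mem_Col_iff)
  have "W i j + c j = W i j + ereal (\<gamma> j) + (c j - ereal (\<gamma> j))" for i j
    by (cases "c j"; cases "W i j") simp_all
  then have "y = (\<lambda>i. SUP j. W i j + ereal (\<gamma> j) + (c j - ereal (\<gamma> j)))"
    unfolding y by simp
  moreover have "rmax_vec (\<lambda>j. c j - ereal (\<gamma> j))"
    using c unfolding rmax_vec_def by (auto simp: ereal_minus_eq_PInfty_iff)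
  ultimately show "y \<in> Col (\<lambda>i j. W i j + ereal (\<gamma> j))"
    unfolding mem_Col_iff by blast
qed

section \<open>Matrices with a strictly dominant diagonal\<close>

lemma dominant_column_not_proportional:
  fixes W :: "'n \<Rightarrow> 'n \<Rightarrow> ereal"
  assumes dom: "\<And>i j. i \<noteq> j \<Longrightarrow> W i j + W j i < W i i + W j j" and "j \<noteq> j'"
  shows "(\<lambda>i. W i j) \<noteq> (\<lambda>i. l + W i j')"
proof
  assume e: "(\<lambda>i. W i j) = (\<lambda>i. l + W i j')"
  have "W j j' + W j' j = W j j' + (l + W j' j')"
    using fun_cong[OF e, of j'] by simp
  also have "\<dots> = (l + W j j') + W j' j'"
    by (simp add: ac_simps)
  also have "\<dots> = W j j + W j' j'"
    using fun_cong[OF e, of j] by simp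
  finally show False
    using dom[OF \<open>j \<noteq> j'\<close>] by simp
qed

lemma dominant_column_minimal:
  fixes W :: "'n::finite \<Rightarrow> 'n \<Rightarrow> ereal"
  assumes W: "\<And>i k. W i k \<noteq> \<infinity>" and diag: "W j j \<noteq> -\<infinity>"
    and dom: "\<And>i j. i \<noteq> j \<Longrightarrow> W i j + W j i < W i i + W j j"
    and v: "v \<in> Col W" and le: "\<And>i. v i \<le> W i j" and eq: "v j = W j j"
  shows "v = (\<lambda>i. W i j)"
proof -
  obtain c where c: "rmax_vec c" and vc: "v = (\<lambda>i. SUP k. W i k + c k)"
    using v by (auto simp: mem_Col_iff)
  obtain l where vj: "v j = W j l + c l"
    using SUP_finite_attained[of "\<lambda>k. W j k + c k"] vc by metis
  have "l = j"
  proof (rule ccontr)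
    assume "l \<noteq> j"
    have "W l l + W j j = (W l l + c l) + W j l"
      using vj eq by (simp add: ac_simps)
    also have "\<dots> \<le> v l + W j l"
      unfolding vc by (intro add_right_mono SUP_upper2[of l]) simp_all
    also have "\<dots> \<le> W l j + W j l"
      using le by (rule add_right_mono)
    finally show False
      using dom[OF \<open>l \<noteq> j\<close>] by simp
  qed
  then have "W j j + c j = W j j"
    using vj eq by simp
  then have "c j = 0"
    using W[of j j] diag c by (cases "W j j"; cases "c j") (auto simp: rmax_vec_def)
  then have "W i j \<le> v i" for i
    unfolding vc by (intro SUP_upper2[of j]) simp_all
  then show ?thesis
    using le by (intro ext order.antisym)
qed

lemma dominant_column_extreme:
  fixes W :: "'n::finite \<Rightarrow> 'n \<Rightarrow> ereal"
  assumes W: "\<And>i k. W i k \<noteq> \<infinity>" and diag: "W j j \<noteq> -\<infinity>"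
    and dom: "\<And>i j. i \<noteq> j \<Longrightarrow> W i j + W j i < W i i + W j j"
  shows "extreme_vec (Col W) (\<lambda>i. W i j)"
  unfolding extreme_vec_def
proof (intro conjI ballI impI)
  show "(\<lambda>i. W i j) \<in> Col W"
    using column_multiple_in_Col[of W 0 j] W by simp
next
  fix v w assume v: "v \<in> Col W" and w: "w \<in> Col W" and vw: "(\<lambda>i. W i j) = (\<lambda>i. max (v i) (w i))"
  have "v i \<le> W i j" "w i \<le> W i j" for i
    using fun_cong[OF vw, of i] by simp_all
  moreover have "v j = W j j \<or> w j = W j j"
    using fun_cong[OF vw, of j] by (simp add: max_def)
  ultimately show "(\<lambda>i. W i j) = v \<or> (\<lambda>i. W i j) = w"
    using dominant_column_minimal[where W=W and j=j, OF W diag dom] v w by metis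
qed

lemma simplicial_Col_dominant:
  fixes W :: "'n::finite \<Rightarrow> 'n \<Rightarrow> ereal"
  assumes W: "\<And>i k. W i k \<noteq> \<infinity>" and diag: "\<And>j. W j j \<noteq> -\<infinity>"
    and dom: "\<And>i j. i \<noteq> j \<Longrightarrow> W i j + W j i < W i i + W j j"
  shows "simplicial (Col W)"
proof -
  have "extreme_directions (Col W) = range (\<lambda>j. ray (\<lambda>i. W i j))"
  proof (intro equalityI subsetI)
    fix D assume "D \<in> extreme_directions (Col W)"
    then obtain u where u: "extreme_vec (Col W) u" "u \<noteq> (\<lambda>i. -\<infinity>)" and D: "D = ray u"
      unfolding extreme_directions_def ray_def by blast
    obtain k m where "u = (\<lambda>i. W i k + ereal m)"
      using extreme_vec_Col_imp_column_multiple[OF W u] by blast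
    then have "D = ray (\<lambda>i. W i k)"
      using D ray_add_const[of "\<lambda>i. W i k" m] by simp
    then show "D \<in> range (\<lambda>j. ray (\<lambda>i. W i j))"
      by simp
  next
    fix D assume "D \<in> range (\<lambda>j. ray (\<lambda>i. W i j))"
    then obtain j where D: "D = ray (\<lambda>i. W i j)" by blast
    have "(\<lambda>i. W i j) \<noteq> (\<lambda>i. -\<infinity>)"
      using diag[of j] by (metis)
    then show "D \<in> extreme_directions (Col W)"
      using dominant_column_extreme[where W=W and j=j, OF W diag dom] D
      unfolding extreme_directions_def ray_def by blast
  qed
  moreover have "inj (\<lambda>j. ray (\<lambda>i. W i j))"
  proof (rule injI)
    fix j j' assume "ray (\<lambda>i. W i j) = ray (\<lambda>i. W i j')"
    then have "(\<lambda>i. W i j) \<in> ray (\<lambda>i. W i j')"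
      using self_in_ray by metis
    then show "j = j'"
      using dominant_column_not_proportional[where W=W, OF dom] by (auto simp: ray_def)
  qed
  ultimately show ?thesis
    unfolding simplicial_def using tropical_cone_Col[where W=W, OF W] by (simp add: card_image)
qed

lemma dominant_shifted_columns_inj:
  fixes W :: "'n \<Rightarrow> 'n \<Rightarrow> ereal"
  assumes dom: "\<And>i j. i \<noteq> j \<Longrightarrow> W i j + W j i < W i i + W j j"
    and W: "\<And>i j. W i j = V i (f j) + ereal (\<gamma> j)"
  shows "inj f"
proof (rule injI, rule ccontr)
  fix j j' assume "f j = f j'" "j \<noteq> j'"
  then have "(\<lambda>i. W i j) = (\<lambda>i. ereal (\<gamma> j - \<gamma> j') + W i j')"
    unfolding W fun_eq_iff by (metis add.commute add.left_commute plus_ereal.simps(1) diff_add_cancel)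
  with dominant_column_not_proportional[where W=W, OF dom \<open>j \<noteq> j'\<close>] show False
    by blast
qed

section \<open>Hilbert balls around finite points\<close>

lemma hilbert_dist_ereal:
  fixes a b :: "'n::finite \<Rightarrow> real"
  defines "d \<equiv> \<lambda>i. a i - b i"
  shows "hilbert_dist (\<lambda>i. ereal (a i)) (\<lambda>i. ereal (b i)) = ereal (Max (range d) - Min (range d))"
proof -
  have bounds: "(\<forall>i. ereal m + ereal (b i) \<le> ereal (a i) \<and> ereal (a i) \<le> ereal l + ereal (b i))
      \<longleftrightarrow> (\<forall>i. m \<le> d i \<and> d i \<le> l)" for l m
    by (auto simp: d_def algebra_simps)
  show ?thesis
    unfolding hilbert_dist_def bounds
  proof (rule order.antisym)
    have "\<forall>i. Min (range d) \<le> d i \<and> d i \<le> Max (range d)"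
      by simp
    then show "Inf {ereal (l - m) |l m. \<forall>i. m \<le> d i \<and> d i \<le> l} \<le> ereal (Max (range d) - Min (range d))"
      by (intro Inf_lower) blast
    show "ereal (Max (range d) - Min (range d)) \<le> Inf {ereal (l - m) |l m. \<forall>i. m \<le> d i \<and> d i \<le> l}"
      by (rule Inf_greatest) (auto intro!: diff_mono)
  qed
qed

lemma hilbert_dist_MInfty:
  assumes "y i = -\<infinity>"
  shows "hilbert_dist (\<lambda>i. ereal (a i)) y = \<infinity>"
proof -
  have "\<not> ereal (a i) \<le> ereal l + y i" for l
    using assms by simp
  then have "{ereal (l - m) | l m. \<forall>i. ereal m + y i \<le> ereal (a i) \<and> ereal (a i) \<le> ereal l + y i} = {}"
    by blast
  then show ?thesis
    unfolding hilbert_dist_def by (metis Inf_empty top_ereal_def)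
qed

lemma hilbert_ball_eq:
  fixes a :: "'n::finite \<Rightarrow> real"
  shows "hilbert_ball (\<lambda>i. ereal (a i)) r =
    {(\<lambda>i. ereal (b i)) | b. \<forall>i j. (a i - b i) - (a j - b j) \<le> r}"
proof (intro equalityI subsetI)
  fix y assume y: "y \<in> hilbert_ball (\<lambda>i. ereal (a i)) r"
  have "y i \<noteq> \<infinity>" for i
    using y by (auto simp: hilbert_ball_def rmax_vecs_def rmax_vec_def)
  moreover have "y i \<noteq> -\<infinity>" for i
    using y hilbert_dist_MInfty[of y i a] by (auto simp: hilbert_ball_def)
  ultimately have "ereal (real_of_ereal (y i)) = y i" for i
    by (cases "y i") auto
  then have yb: "y = (\<lambda>i. ereal (real_of_ereal (y i)))"
    by simp
  define b where "b i = real_of_ereal (y i)" for i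
  define d where "d i = a i - b i" for i
  have "Max (range d) - Min (range d) \<le> r"
    using y yb hilbert_dist_ereal[of a b] by (simp add: hilbert_ball_def b_def d_def)
  moreover have "d i - d j \<le> Max (range d) - Min (range d)" for i j
    by (intro diff_mono) simp_all
  ultimately have "\<forall>i j. (a i - b i) - (a j - b j) \<le> r"
    unfolding d_def[symmetric] by (meson order_trans)
  with yb show "y \<in> {(\<lambda>i. ereal (b i)) | b. \<forall>i j. (a i - b i) - (a j - b j) \<le> r}"
    by (auto simp: b_def)
next
  fix y assume "y \<in> {(\<lambda>i. ereal (b i)) | b. \<forall>i j. (a i - b i) - (a j - b j) \<le> r}"
  then obtain b where y: "y = (\<lambda>i. ereal (b i))" and r: "\<forall>i j. (a i - b i) - (a j - b j) \<le> r"
    by blast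
  define d where "d i = a i - b i" for i
  have "Max (range d) \<in> range d" "Min (range d) \<in> range d"
    by (simp_all add: Max_in Min_in)
  then obtain i j where "Max (range d) = d i" "Min (range d) = d j"
    by blast
  then have "hilbert_dist (\<lambda>i. ereal (a i)) y \<le> ereal r"
    using r hilbert_dist_ereal[of a b] by (simp add: y d_def)
  then show "y \<in> hilbert_ball (\<lambda>i. ereal (a i)) r"
    by (simp add: hilbert_ball_def rmax_vecs_def rmax_vec_def y)
qed

lemma hilbert_ball_subset_Col_imp_separating_column:
  fixes V :: "'n::finite \<Rightarrow> 'p::finite \<Rightarrow> ereal"
  assumes ball: "hilbert_ball (\<lambda>i. ereal (a i)) r \<subseteq> Col V" and "0 \<le> r"
  shows "\<exists>k \<gamma>. V j k + ereal \<gamma> = ereal (a j) \<and> (\<forall>i. i \<noteq> j \<longrightarrow> V i k + ereal \<gamma> \<le> ereal (a i - r))"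
proof -
  define g where "g i = (if i = j then a i else a i - r)" for i
  have "(\<lambda>i. ereal (g i)) \<in> hilbert_ball (\<lambda>i. ereal (a i)) r"
    unfolding hilbert_ball_eq using \<open>0 \<le> r\<close> by (auto simp: g_def)
  with ball have "(\<lambda>i. ereal (g i)) \<in> Col V"
    by blast
  then obtain c where c: "rmax_vec c" and gc: "(\<lambda>i. ereal (g i)) = (\<lambda>i. SUP k. V i k + c k)"
    unfolding mem_Col_iff by blast
  obtain k where k: "(SUP k. V j k + c k) = V j k + c k"
    by (rule SUP_finite_attained)
  have col_le: "V i k + c k \<le> ereal (g i)" for i
    using fun_cong[OF gc, of i] SUP_upper[of k UNIV "\<lambda>k. V i k + c k"] by simp
  have col_eq: "V j k + c k = ereal (a j)"
    using k fun_cong[OF gc, of j] by (simp add: g_def)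
  obtain \<gamma> where \<gamma>: "c k = ereal \<gamma>"
    using c col_eq by (cases "c k"; cases "V j k") (auto simp: rmax_vec_def)
  have "V i k + ereal \<gamma> \<le> ereal (a i - r)" if "i \<noteq> j" for i
    using col_le[of i] that by (simp add: g_def \<gamma>)
  then show ?thesis
    using col_eq by (intro exI[of _ k] exI[of _ \<gamma>]) (simp add: \<gamma>)
qed

lemma hilbert_ball_subset_Col_separated:
  fixes W :: "'n::finite \<Rightarrow> 'n \<Rightarrow> ereal"
  assumes diag: "\<And>j. W j j = ereal (a j)"
    and off: "\<And>i j. i \<noteq> j \<Longrightarrow> W i j \<le> ereal (a i - r)"
  shows "hilbert_ball (\<lambda>i. ereal (a i)) r \<subseteq> Col W"
proof
  fix y assume "y \<in> hilbert_ball (\<lambda>i. ereal (a i)) r"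
  then obtain b where y: "y = (\<lambda>i. ereal (b i))" and r: "\<And>i j. (a i - b i) - (a j - b j) \<le> r"
    unfolding hilbert_ball_eq by blast
  have "(SUP j. W i j + ereal (b j - a j)) = ereal (b i)" for i
  proof (rule order.antisym)
    have "W i j + ereal (b j - a j) \<le> ereal (b i)" for j
    proof (cases "i = j")
      case False
      have "W i j + ereal (b j - a j) \<le> ereal (a i - r) + ereal (b j - a j)"
        using off[OF False] by (rule add_right_mono)
      also have "\<dots> \<le> ereal (b i)"
        using r[of i j] by simp
      finally show ?thesis .
    qed (simp add: diag)
    then show "(SUP j. W i j + ereal (b j - a j)) \<le> ereal (b i)"
      by (rule SUP_least)
    show "ereal (b i) \<le> (SUP j. W i j + ereal (b j - a j))"
      by (rule SUP_upper2[of i]) (simp_all add: diag)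
  qed
  then have "y = (\<lambda>i. SUP j. W i j + ereal (b j - a j))"
    unfolding y by simp
  then show "y \<in> Col W"
    unfolding mem_Col_iff by (intro exI[of _ "\<lambda>j. ereal (b j - a j)"]) (simp add: rmax_vec_def)
qed

lemma separated_imp_dominant:
  fixes W :: "'n \<Rightarrow> 'n \<Rightarrow> ereal"
  assumes diag: "\<And>j. W j j = ereal (a j)"
    and off: "\<And>i j. i \<noteq> j \<Longrightarrow> W i j \<le> ereal (a i - r)"
    and "r > 0" and "i \<noteq> j"
  shows "W i j + W j i < W i i + W j j"
proof -
  have "W i j + W j i \<le> ereal (a i - r) + ereal (a j - r)"
    using off \<open>i \<noteq> j\<close> by (intro add_mono) auto
  also have "\<dots> < W i i + W j j"
    using \<open>r > 0\<close> by (simp add: diag)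
  finally show ?thesis .
qed

theorem proposition3p8:
  fixes V :: "'n::finite \<Rightarrow> 'p::finite \<Rightarrow> ereal"
    and a :: "'n \<Rightarrow> real" and r :: real
  assumes "\<forall>i k. V i k \<noteq> \<infinity>"
    and "\<forall>i. \<exists>k. V i k \<noteq> -\<infinity>"
    and "\<forall>k. \<exists>i. V i k \<noteq> -\<infinity>"
    and "r > 0"
    and "hilbert_ball (\<lambda>i. ereal (a i)) r \<subseteq> Col V"
  shows "\<exists>S. card S = card (UNIV :: 'n set) \<and> simplicial (col_sub V S) \<and>
             hilbert_ball (\<lambda>i. ereal (a i)) r \<subseteq> col_sub V S"
proof -
  have "\<forall>j. \<exists>k \<gamma>. V j k + ereal \<gamma> = ereal (a j) \<and> (\<forall>i. i \<noteq> j \<longrightarrow> V i k + ereal \<gamma> \<le> ereal (a i - r))"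
    using hilbert_ball_subset_Col_imp_separating_column[OF assms(5)] assms(4) by simp
  then obtain kk \<gamma> where sep: "\<And>j. V j (kk j) + ereal (\<gamma> j) = ereal (a j)"
    "\<And>i j. i \<noteq> j \<Longrightarrow> V i (kk j) + ereal (\<gamma> j) \<le> ereal (a i - r)"
    by metis
  define W where "W i j = V i (kk j) + ereal (\<gamma> j)" for i j
  have W: "W i j \<noteq> \<infinity>" for i j
    using assms(1) by (simp add: W_def)
  have diag: "\<And>j. W j j = ereal (a j)" and off: "\<And>i j. i \<noteq> j \<Longrightarrow> W i j \<le> ereal (a i - r)"
    using sep by (simp_all add: W_def)
  have dom: "W i j + W j i < W i i + W j j" if "i \<noteq> j" for i j
    using separated_imp_dominant[where W=W, OF diag off \<open>r > 0\<close> that] .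
  have "inj kk"
    by (rule dominant_shifted_columns_inj[where W=W and V=V and f=kk and \<gamma>=\<gamma>, OF dom W_def])
  have "col_sub V (range kk) = Col W"
    unfolding col_sub_range[OF \<open>inj kk\<close>] W_def Col_add_column_consts ..
  then show ?thesis
    using card_image[OF \<open>inj kk\<close>] simplicial_Col_dominant[where W=W, OF W _ dom]
      hilbert_ball_subset_Col_separated[where W=W, OF diag off] diag
    by (intro exI[of _ "range kk"]) auto
qed

end
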